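(* Let $G$ be a graph and let $S$ be the set of vertices covered by a maximal (under inclusion) collection of pairwise edge-disjoint induced paws in $G$. Then every vertex $s\in S$ is adjacent to at most one connected component of $G-S$ that is a complete multipartite graph.
   Context: The paw is the graph on four vertices $x_1,x_2,x_3,x_4$ with edges $x_1x_2,x_2x_3,x_1x_3,x_3x_4$. A complete multipartite graph here means one whose vertex set is partitioned into at least three nonempty independent sets (parts) with all edges between different parts present (in particular it contains a triangle). *)

theory Defs
  imports Main
begin

definition simple_graph :: "'a set \<Rightarrow> ('a \<Rightarrow> 'a \<Rightarrow> bool) \<Rightarrow> bool" where
  "simple_graph V E \<longleftrightarrow> finite V \<and> (\<forall>x y. E x y \<longrightarrow> x \<in> V \<and> y \<in> V)
     \<and> (\<forall>x y. E x y \<longrightarrow> E y x) \<and> (\<forall>x. \<not> E x x)"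

definition induced_paw :: "'a set \<Rightarrow> ('a \<Rightarrow> 'a \<Rightarrow> bool) \<Rightarrow> 'a set set \<Rightarrow> bool" where
  "induced_paw V E P \<longleftrightarrow> (\<exists>x1 x2 x3 x4. distinct [x1, x2, x3, x4]
     \<and> x1 \<in> V \<and> x2 \<in> V \<and> x3 \<in> V \<and> x4 \<in> V
     \<and> E x1 x2 \<and> E x2 x3 \<and> E x1 x3 \<and> E x3 x4 \<and> \<not> E x1 x4 \<and> \<not> E x2 x4
     \<and> P = {{x1, x2}, {x2, x3}, {x1, x3}, {x3, x4}})"

definition edge_disjoint_paws :: "'a set \<Rightarrow> ('a \<Rightarrow> 'a \<Rightarrow> bool) \<Rightarrow> 'a set set set \<Rightarrow> bool" where
  "edge_disjoint_paws V E C \<longleftrightarrow> (\<forall>P\<in>C. induced_paw V E P)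
     \<and> (\<forall>P\<in>C. \<forall>Q\<in>C. P \<noteq> Q \<longrightarrow> P \<inter> Q = {})"

definition maximal_edge_disjoint_paws :: "'a set \<Rightarrow> ('a \<Rightarrow> 'a \<Rightarrow> bool) \<Rightarrow> 'a set set set \<Rightarrow> bool" where
  "maximal_edge_disjoint_paws V E C \<longleftrightarrow> edge_disjoint_paws V E C
     \<and> (\<forall>C'. C \<subseteq> C' \<and> edge_disjoint_paws V E C' \<longrightarrow> C' = C)"

definition covered :: "'a set set set \<Rightarrow> 'a set" where
  "covered C = \<Union>(\<Union>C)"

definition component :: "'a set \<Rightarrow> ('a \<Rightarrow> 'a \<Rightarrow> bool) \<Rightarrow> 'a set \<Rightarrow> bool" where
  "component W E K \<longleftrightarrow> (\<exists>v\<in>W. K = {u. (\<lambda>a b. a \<in> W \<and> b \<in> W \<and> E a b)\<^sup>*\<^sup>* v u})"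

definition complete_multipartite :: "'a set \<Rightarrow> ('a \<Rightarrow> 'a \<Rightarrow> bool) \<Rightarrow> bool" where
  "complete_multipartite K E \<longleftrightarrow> (\<exists>Ps. \<Union>Ps = K \<and> (\<forall>X\<in>Ps. X \<noteq> {})
     \<and> (\<forall>X\<in>Ps. \<forall>Y\<in>Ps. X \<noteq> Y \<longrightarrow> X \<inter> Y = {})
     \<and> (\<forall>X\<in>Ps. \<forall>x\<in>X. \<forall>y\<in>X. \<not> E x y)
     \<and> (\<forall>X\<in>Ps. \<forall>Y\<in>Ps. X \<noteq> Y \<longrightarrow> (\<forall>x\<in>X. \<forall>y\<in>Y. E x y))
     \<and> (\<exists>X\<in>Ps. \<exists>Y\<in>Ps. \<exists>Z\<in>Ps. X \<noteq> Y \<and> X \<noteq> Z \<and> Y \<noteq> Z))"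

end

theory Submission
  imports Defs
begin

text \<open>Let \<open>u\<^sub>1 \<in> K\<^sub>1\<close> and \<open>u\<^sub>2 \<in> K\<^sub>2\<close> be neighbours of \<open>s\<close>. Having at least three parts, \<open>K\<^sub>1\<close>
  contains a triangle \<open>u\<^sub>1 v w\<close>. If \<open>s\<close> is adjacent to \<open>v\<close>, then the triangle \<open>u\<^sub>1 v s\<close> with
  pendant edge \<open>s u\<^sub>2\<close> is an induced paw, since distinct components are not adjacent; likewise
  for \<open>w\<close>. Otherwise the triangle \<open>u\<^sub>1 v w\<close> with pendant edge \<open>u\<^sub>1 s\<close> is an induced paw. In
  each case every edge of the paw has an endpoint outside \<open>S\<close>, so the paw is edge-disjoint
  from all paws of the collection, contradicting maximality.\<close>

lemma maximal_edge_disjoint_paws_covers_edge: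
  assumes max: "maximal_edge_disjoint_paws V E C" and paw: "induced_paw V E P"
  shows "\<exists>e\<in>P. e \<subseteq> covered C"
proof (rule ccontr)
  assume uncovered: "\<not> (\<exists>e\<in>P. e \<subseteq> covered C)"
  have edges_covered: "e \<subseteq> covered C" if "Q \<in> C" "e \<in> Q" for Q e
    using that unfolding covered_def by blast
  have disjoint: "P \<inter> Q = {}" if "Q \<in> C" for Q
    using uncovered edges_covered[OF that] by blast
  have "edge_disjoint_paws V E C"
    using max unfolding maximal_edge_disjoint_paws_def by blast
  then have "edge_disjoint_paws V E (insert P C)"
    using paw disjoint unfolding edge_disjoint_paws_def by (auto simp: inf_commute)
  then have "P \<in> C"
    using max unfolding maximal_edge_disjoint_paws_def by blast
  moreover obtain e where "e \<in> P"
    using paw unfolding induced_paw_def by blast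
  ultimately show False
    using uncovered edges_covered by blast
qed

lemma induced_pawI:
  assumes "simple_graph V E"
    and "E x1 x2" "E x2 x3" "E x1 x3" "E x3 x4" "\<not> E x1 x4" "\<not> E x2 x4"
  shows "induced_paw V E {{x1, x2}, {x2, x3}, {x1, x3}, {x3, x4}}"
proof -
  have "x1 \<in> V" "x2 \<in> V" "x3 \<in> V" "x4 \<in> V" "distinct [x1, x2, x3, x4]"
    using assms unfolding simple_graph_def by auto
  then show ?thesis
    using assms unfolding induced_paw_def by blast
qed

lemma no_paw_with_uncovered_edges:
  assumes "simple_graph V E" and "maximal_edge_disjoint_paws V E C"
    and "E x1 x2" "E x2 x3" "E x1 x3" "E x3 x4" "\<not> E x1 x4" "\<not> E x2 x4"
    and "x1 \<notin> covered C" "x2 \<notin> covered C" "x3 \<notin> covered C \<or> x4 \<notin> covered C"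
  shows False
  using maximal_edge_disjoint_paws_covers_edge[OF assms(2) induced_pawI[OF assms(1,3-8)]]
    assms(9-11) by auto

lemma component_subset:
  assumes "component W E K"
  shows "K \<subseteq> W"
  using assms unfolding component_def by (auto elim: rtranclp.cases)

lemma component_eq_if_common_vertex:
  assumes "simple_graph V E" and "component W E K" "component W E K'" and "x \<in> K" "x \<in> K'"
  shows "K = K'"
proof -
  define R where "R = (\<lambda>a b. a \<in> W \<and> b \<in> W \<and> E a b)"
  have "symp R\<^sup>*\<^sup>*"
    using assms(1) unfolding R_def simple_graph_def by (intro symp_rtranclp sympI) blast
  then have "R\<^sup>*\<^sup>* a b \<longleftrightarrow> R\<^sup>*\<^sup>* a' b" if "R\<^sup>*\<^sup>* a x" "R\<^sup>*\<^sup>* a' x" for a a' b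
    using that by (meson rtranclp_trans sympD)
  then show ?thesis
    using assms(2-5) unfolding component_def R_def[symmetric] by auto
qed

lemma component_eq_if_adjacent:
  assumes "simple_graph V E" and "component W E K" "component W E K'"
    and "x \<in> K" "y \<in> K'" "E x y"
  shows "K = K'"
proof -
  have "x \<in> W" "y \<in> W"
    using component_subset[OF assms(2)] component_subset[OF assms(3)] assms(4,5) by blast+
  obtain a where K: "K = {u. (\<lambda>a b. a \<in> W \<and> b \<in> W \<and> E a b)\<^sup>*\<^sup>* a u}"
    using assms(2) unfolding component_def by blast
  have "y \<in> K"
    using assms(4,6) \<open>x \<in> W\<close> \<open>y \<in> W\<close> unfolding K by (auto intro: rtranclp.rtrancl_into_rtrancl)
  then show ?thesis
    using component_eq_if_common_vertex[OF assms(1-3) _ assms(5)] by blast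
qed

lemma complete_multipartite_triangle:
  assumes "complete_multipartite K E" and "u \<in> K"
  obtains v w where "v \<in> K" "w \<in> K" "E u v" "E u w" "E v w"
proof -
  obtain Ps where cover: "\<Union>Ps = K" and nonempty: "\<forall>X\<in>Ps. X \<noteq> {}"
    and complete: "\<forall>X\<in>Ps. \<forall>Y\<in>Ps. X \<noteq> Y \<longrightarrow> (\<forall>x\<in>X. \<forall>y\<in>Y. E x y)"
    and three: "\<exists>X\<in>Ps. \<exists>Y\<in>Ps. \<exists>Z\<in>Ps. X \<noteq> Y \<and> X \<noteq> Z \<and> Y \<noteq> Z"
    using assms(1) unfolding complete_multipartite_def by (elim exE conjE) simp
  obtain X where X: "X \<in> Ps" "u \<in> X"
    using assms(2) cover by blast
  obtain Y Z where YZ: "Y \<in> Ps" "Z \<in> Ps" "Y \<noteq> X" "Z \<noteq> X" "Y \<noteq> Z"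
    using three by blast
  obtain v w where "v \<in> Y" "w \<in> Z"
    using nonempty YZ(1,2) by (meson all_not_in_conv)
  then show thesis
    using that X YZ cover complete by blast
qed

theorem lemma4:
  fixes V :: "'a set" and E :: "'a \<Rightarrow> 'a \<Rightarrow> bool" and C :: "'a set set set"
  assumes "simple_graph V E"
    and "maximal_edge_disjoint_paws V E C"
    and "s \<in> covered C"
    and "component (V - covered C) E K1" and "complete_multipartite K1 E" and "\<exists>u\<in>K1. E s u"
    and "component (V - covered C) E K2" and "complete_multipartite K2 E" and "\<exists>u\<in>K2. E s u"
  shows "K1 = K2"
proof (rule ccontr)
  assume "K1 \<noteq> K2"
  note graph = assms(1) and max = assms(2)
  obtain u1 u2 where u1: "u1 \<in> K1" "E s u1" and u2: "u2 \<in> K2" "E s u2"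
    using assms(6,9) by blast
  obtain v w where vw: "v \<in> K1" "w \<in> K1" "E u1 v" "E u1 w" "E v w"
    using complete_multipartite_triangle[OF assms(5) u1(1)] .
  have not_adjacent_u2: "\<not> E x u2" if "x \<in> K1" for x
    using component_eq_if_adjacent[OF graph assms(4,7) that u2(1)] \<open>K1 \<noteq> K2\<close> by blast
  have uncovered: "x \<notin> covered C" if "x \<in> K1 \<or> x \<in> K2" for x
    using that component_subset[OF assms(4)] component_subset[OF assms(7)] by blast
  have adjacent_sym: "E a b \<Longrightarrow> E b a" for a b
    using graph unfolding simple_graph_def by blast
  consider "E s v" | "E s w" | "\<not> E s v" "\<not> E s w" by blast
  then show False
  proof cases
    case 1
    then show False
      using no_paw_with_uncovered_edges[OF graph max, of u1 v s u2]
      by (simp add: adjacent_sym vw u1 u2 not_adjacent_u2 uncovered)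
  next
    case 2
    then show False
      using no_paw_with_uncovered_edges[OF graph max, of u1 w s u2]
      by (simp add: adjacent_sym vw u1 u2 not_adjacent_u2 uncovered)
  next
    case 3
    then show False
      using no_paw_with_uncovered_edges[OF graph max, of v w u1 s]
      by (metis adjacent_sym vw u1 uncovered)
  qed
qed

end
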